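(* Every regular tetrahedron $T$ in $\mathbb{R}^3$ can be inside-out dissected with $34$ pieces.
   Context: An inside-out dissection of a polyhedron $P$ is a decomposition of $P$ into finitely many polyhedra $P_1,\ldots,P_k$ (called pieces; they have pairwise disjoint interiors and their union is $P$) such that (1) the pieces can be rearranged, applying to each piece only a rotation and a translation, to form a polyhedron $P'$ congruent to $P$, and (2) the boundary of $P'$ is composed of internal cuts of $P$, i.e. of (images of) portions of the pieces' boundaries that lay in the interior of $P$ rather than on the boundary of $P$. If such a decomposition exists, $P$ is said to be inside-out dissected with $k$ pieces. *)

theory Defs
  imports "HOL-Analysis.Analysis"
begin

definition polyhedron :: "(real^3) set \<Rightarrow> bool" where
  "polyhedron P \<longleftrightarrow>
     (\<exists>F. finite F \<and> (\<forall>S\<in>F. finite S) \<and> P = (\<Union>S\<in>F. convex hull S))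
     \<and> connected P \<and> interior P \<noteq> {} \<and> closure (interior P) = P"

definition rigid_motion :: "(real^3 \<Rightarrow> real^3) \<Rightarrow> bool" where
  "rigid_motion g \<longleftrightarrow>
     (\<exists>A b. orthogonal_matrix A \<and> det A = 1 \<and> (\<forall>x. g x = A *v x + b))"

definition congruent :: "(real^3) set \<Rightarrow> (real^3) set \<Rightarrow> bool" where
  "congruent P Q \<longleftrightarrow>
     (\<exists>f. (\<forall>x y. dist (f x) (f y) = dist x y) \<and> f ` P = Q)"

definition inside_out_dissection ::
  "(real^3) set \<Rightarrow> nat \<Rightarrow> (nat \<Rightarrow> (real^3) set) \<Rightarrow> (nat \<Rightarrow> (real^3 \<Rightarrow> real^3)) \<Rightarrow> bool" where
  "inside_out_dissection P k Ps gs \<longleftrightarrow>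
     (\<forall>i<k. polyhedron (Ps i)) \<and>
     (\<forall>i<k. \<forall>j<k. i \<noteq> j \<longrightarrow> interior (Ps i) \<inter> interior (Ps j) = {}) \<and>
     (\<Union>i<k. Ps i) = P \<and>
     (\<forall>i<k. rigid_motion (gs i)) \<and>
     (\<forall>i<k. \<forall>j<k. i \<noteq> j \<longrightarrow> interior (gs i ` Ps i) \<inter> interior (gs j ` Ps j) = {}) \<and>
     congruent P (\<Union>i<k. gs i ` Ps i) \<and>
     frontier (\<Union>i<k. gs i ` Ps i)
       \<subseteq> (\<Union>i<k. gs i ` closure (frontier (Ps i) \<inter> interior P))"

definition inside_out_dissectable :: "(real^3) set \<Rightarrow> nat \<Rightarrow> bool" where
  "inside_out_dissectable P k \<longleftrightarrow> (\<exists>Ps gs. inside_out_dissection P k Ps gs)"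

definition regular_tetrahedron :: "(real^3) set \<Rightarrow> bool" where
  "regular_tetrahedron T \<longleftrightarrow>
     (\<exists>a b c d s. s > 0 \<and> dist a b = s \<and> dist a c = s \<and> dist a d = s \<and>
        dist b c = s \<and> dist b d = s \<and> dist c d = s \<and> T = convex hull {a, b, c, d})"

end

theory Submission
  imports Defs
begin

(* Scale a regular tetrahedron so that its barycentric coordinates sum to 4. The planes on
   which some coordinate is an integer cut it into 34 cells: 20 small tetrahedra, 10 octahedra
   and 4 inverted tetrahedra, each labelled by the integer parts of its coordinates. An explicit
   table moves every cell by a translation or a half-turn onto another cell, permuting the cells,
   such that wherever a moved cell meets the boundary of the big tetrahedron it does so through
   the image of a face of the original cell lying inside the big tetrahedron. Hence the rearranged
   tetrahedron is bounded by internal cuts only. Similarities carry inside-out dissections to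
   inside-out dissections, and every regular tetrahedron is similar to the scaled one. *)

lemma all_nat_less_4: "(\<forall>m<4. P (m::nat)) \<longleftrightarrow> P 0 \<and> P 1 \<and> P 2 \<and> P 3"
  by (auto simp: less_Suc_eq numeral_eq_Suc)

lemma ex_nat_less_4: "(\<exists>m<4. P (m::nat)) \<longleftrightarrow> P 0 \<or> P 1 \<or> P 2 \<or> P 3"
  by (auto simp: less_Suc_eq numeral_eq_Suc)

lemma nat_less_4_cases: "(m::nat) < 4 \<Longrightarrow> m = 0 \<or> m = 1 \<or> m = 2 \<or> m = 3"
  by auto

lemma polyhedron_if_polytope:
  assumes "polytope S" "interior S \<noteq> {}"
  shows "polyhedron S"
proof -
  obtain V where V: "finite V" "S = convex hull V"
    using assms(1) unfolding polytope_def by blast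
  then have "convex S" "closed S"
    by (simp_all add: convex_convex_hull compact_imp_closed finite_imp_compact_convex_hull)
  then show ?thesis
    unfolding polyhedron_def
    using V assms(2) convex_connected convex_closure_interior[of S]
    by (intro conjI exI[of _ "{V}"]) auto
qed

lemma mem_closure_Int_interior_convex:
  fixes F S :: "'a::euclidean_space set"
  assumes "convex F" "convex S" "q \<in> F" "q \<in> interior S" "l \<in> F" "l \<in> closure S"
  shows "l \<in> closure (F \<inter> interior S)"
proof (cases "l = q")
  case True
  then show ?thesis
    using assms(3,4) closure_subset by fastforce
next
  case False
  have "open_segment q l \<subseteq> interior S"
    using assms(2,4,6) by (rule in_interior_closure_convex_segment)
  moreover have "open_segment q l \<subseteq> F"
    using assms(1,3,5) by (simp add: convex_contains_open_segment)
  ultimately have "closure (open_segment q l) \<subseteq> closure (F \<inter> interior S)"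
    by (meson closure_mono le_inf_iff)
  then show ?thesis
    using False by auto
qed

lemma image_comp_inverse: "(\<And>x. \<psi> (\<phi> x) = x) \<Longrightarrow> (\<phi> \<circ> g \<circ> \<psi>) ` \<phi> ` X = \<phi> ` g ` X"
  by (simp add: image_comp comp_def)

lemma UN_less_length_nth: "length xs = n \<Longrightarrow> (\<Union>i<n. A (xs!i)) = (\<Union>x\<in>set xs. A x)"
  by (auto simp: in_set_conv_nth) (metis nth_mem)

lemma inner_equilateral:
  fixes a b c :: "'a::real_inner"
  assumes "dist a b = s" "dist a c = s" "dist b c = s"
  shows "(b - a) \<bullet> (c - a) = s\<^sup>2 / 2"
proof -
  have "(b - a) \<bullet> (b - a) = s\<^sup>2" "(c - a) \<bullet> (c - a) = s\<^sup>2"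
    "((b - a) - (c - a)) \<bullet> ((b - a) - (c - a)) = s\<^sup>2"
    using assms by (simp_all add: dist_norm norm_minus_commute flip: power2_norm_eq_inner)
  then show ?thesis
    by (simp add: inner_diff_left inner_diff_right inner_commute)
qed

section \<open>Similarities\<close>

definition similarity :: "real^'n \<Rightarrow> real \<Rightarrow> real^'n^'n \<Rightarrow> real^'n \<Rightarrow> real^'n" where
  "similarity a k Q x = a + k *\<^sub>R (Q *v x)"

lemma similarity_similarity:
  "similarity a k Q (similarity b k' Q' x) = similarity (a + k *\<^sub>R (Q *v b)) (k * k') (Q ** Q') x"
  by (simp add: similarity_def matrix_vector_right_distrib matrix_vector_mult_scaleR
      matrix_vector_mul_assoc scaleR_add_right)

lemma similarity_inverse:
  assumes "orthogonal_matrix Q" "k \<noteq> 0"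
  obtains b where "\<And>x. similarity b (1/k) (transpose Q) (similarity a k Q x) = x"
    and "\<And>y. similarity a k Q (similarity b (1/k) (transpose Q) y) = y"
proof
  define b where "b = (- 1 / k) *\<^sub>R (transpose Q *v a)"
  have QQ: "transpose Q ** Q = mat 1" "Q ** transpose Q = mat 1"
    using assms(1) by (simp_all add: orthogonal_matrix_def)
  have id: "similarity 0 1 (mat 1) x = x" for x
    by (simp add: similarity_def)
  show "similarity b (1/k) (transpose Q) (similarity a k Q x) = x" for x
    using assms(2) id unfolding similarity_similarity QQ b_def by simp
  have "Q *v b = (- 1 / k) *\<^sub>R a"
    unfolding b_def matrix_vector_mult_scaleR matrix_vector_mul_assoc QQ matrix_vector_mul_lid ..
  then show "similarity a k Q (similarity b (1/k) (transpose Q) y) = y" for y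
    using assms(2) id unfolding similarity_similarity QQ by simp
qed

lemma norm_orthogonal_matrix_mult:
  fixes Q :: "real^'n^'n"
  shows "orthogonal_matrix Q \<Longrightarrow> norm (Q *v x) = norm x"
  using orthogonal_transformation_matrix[of "(*v) Q"]
  by (simp add: orthogonal_transformation_norm matrix_of_matrix_vector_mul)

lemma dist_similarity:
  "orthogonal_matrix Q \<Longrightarrow> dist (similarity a k Q x) (similarity a k Q y) = \<bar>k\<bar> * dist x y"
  by (simp add: similarity_def dist_norm norm_orthogonal_matrix_mult
      flip: scaleR_diff_right matrix_vector_mult_diff_distrib)

lemma similarity_linear_translation:
  "similarity a k Q = (+) a \<circ> (\<lambda>x. k *\<^sub>R (Q *v x))"
  by (simp add: similarity_def fun_eq_iff)

lemma linear_scaled_matrix: "linear (\<lambda>x. k *\<^sub>R ((Q :: real^'n^'n) *v x))"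
  by (simp add: linear_iff matrix_vector_right_distrib matrix_vector_mult_scaleR algebra_simps)

lemma inj_similarity:
  assumes "orthogonal_matrix Q" "k \<noteq> 0"
  shows "inj (similarity a k Q)"
  using similarity_inverse[OF assms] by (metis injI)

lemma inj_scaled_matrix:
  fixes Q :: "real^'n^'n"
  assumes "orthogonal_matrix Q" "k \<noteq> 0"
  shows "inj (\<lambda>x. k *\<^sub>R (Q *v x))"
  using inj_similarity[OF assms, of 0] unfolding similarity_def[abs_def] by simp

lemma interior_similarity_image:
  assumes "orthogonal_matrix Q" "k \<noteq> 0"
  shows "interior (similarity a k Q ` S) = similarity a k Q ` interior S"
  unfolding similarity_linear_translation image_comp[symmetric] interior_translation
  using interior_injective_linear_image[OF linear_scaled_matrix inj_scaled_matrix[OF assms]] by simp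

lemma closure_similarity_image:
  assumes "orthogonal_matrix Q" "k \<noteq> 0"
  shows "closure (similarity a k Q ` S) = similarity a k Q ` closure S"
  unfolding similarity_linear_translation image_comp[symmetric] closure_translation
  using closure_injective_linear_image[OF linear_scaled_matrix inj_scaled_matrix[OF assms]] by simp

lemma frontier_similarity_image:
  assumes "orthogonal_matrix Q" "k \<noteq> 0"
  shows "frontier (similarity a k Q ` S) = similarity a k Q ` frontier S"
  unfolding frontier_def interior_similarity_image[OF assms] closure_similarity_image[OF assms]
  using image_set_diff[OF inj_similarity[OF assms]] by simp

lemma convex_hull_similarity_image:
  "convex hull (similarity a k Q ` S) = similarity a k Q ` (convex hull S)"
  unfolding similarity_linear_translation image_comp[symmetric]
  by (simp add: convex_hull_translation convex_hull_linear_image[OF linear_scaled_matrix])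

lemma polyhedron_similarity_image:
  assumes Q: "orthogonal_matrix Q" "k \<noteq> 0" and C: "polyhedron C"
  shows "polyhedron (similarity a k Q ` C)"
proof -
  obtain F where F: "finite F" "\<forall>S\<in>F. finite S" "C = (\<Union>S\<in>F. convex hull S)"
    using C unfolding polyhedron_def by blast
  have "continuous_on C (similarity a k Q)"
    unfolding similarity_def by (intro continuous_intros)
  then have "connected (similarity a k Q ` C)"
    using C connected_continuous_image unfolding polyhedron_def by blast
  moreover have "similarity a k Q ` C = (\<Union>S\<in>(image (similarity a k Q)) ` F. convex hull S)"
    unfolding F(3) by (simp add: image_UN convex_hull_similarity_image)
  ultimately show ?thesis
    using C F(1,2) unfolding polyhedron_def interior_similarity_image[OF Q]
      closure_similarity_image[OF Q]
    by (intro conjI exI[of _ "(image (similarity a k Q)) ` F"]) auto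
qed

lemma rigid_motion_conj_similarity:
  assumes Q: "orthogonal_matrix Q" "k \<noteq> 0" and g: "rigid_motion g"
  shows "rigid_motion (similarity a k Q \<circ> g \<circ> similarity b (1/k) (transpose Q))"
proof -
  obtain A c where A: "orthogonal_matrix A" "det A = 1" "\<And>x. g x = A *v x + c"
    using g unfolding rigid_motion_def by blast
  define M where "M = Q ** A ** transpose Q"
  have "orthogonal_matrix M"
    unfolding M_def using Q(1) A(1) by (simp add: orthogonal_matrix_mul)
  moreover have "det M = 1"
    using det_orthogonal_matrix[OF Q(1)] A(2) by (auto simp: M_def det_mul det_transpose)
  moreover have "(similarity a k Q \<circ> g \<circ> similarity b (1/k) (transpose Q)) y =
      M *v y + similarity a k Q (A *v b + c)" for y
    using Q(2) by (simp add: similarity_def A(3) M_def matrix_vector_right_distrib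
        matrix_vector_mult_scaleR matrix_vector_mul_assoc matrix_mul_assoc scaleR_add_right
        algebra_simps del: transpose_matrix_vector)
  ultimately show ?thesis
    unfolding rigid_motion_def by blast
qed

lemma congruent_similarity_image:
  assumes Q: "orthogonal_matrix Q" "k \<noteq> 0" and "congruent P U"
  shows "congruent (similarity a k Q ` P) (similarity a k Q ` U)"
proof -
  obtain f where f: "\<And>x y. dist (f x) (f y) = dist x y" "f ` P = U"
    using assms(3) unfolding congruent_def by blast
  obtain b where inv: "\<And>x. similarity b (1/k) (transpose Q) (similarity a k Q x) = x"
    using similarity_inverse[OF Q] by blast
  define h where "h = similarity a k Q \<circ> f \<circ> similarity b (1/k) (transpose Q)"
  have "dist (h x) (h y) = dist x y" for x y
    using Q by (simp add: h_def dist_similarity f(1))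
  moreover have "h ` similarity a k Q ` P = similarity a k Q ` U"
    unfolding h_def f(2)[symmetric] by (simp add: image_comp comp_def inv)
  ultimately show ?thesis
    unfolding congruent_def by blast
qed

lemma similarity_image_Int:
  "orthogonal_matrix Q \<Longrightarrow> k \<noteq> 0 \<Longrightarrow>
    similarity a k Q ` X \<inter> similarity a k Q ` Y = similarity a k Q ` (X \<inter> Y)"
  using image_Int[OF inj_similarity] by metis

lemma internal_cuts_similarity_image:
  assumes Q: "orthogonal_matrix Q" "k \<noteq> 0"
    and inv: "\<And>x. similarity b (1/k) (transpose Q) (similarity a k Q x) = x"
    and cuts: "frontier (\<Union>i<n. gs i ` Ps i) \<subseteq> (\<Union>i<n. gs i ` closure (frontier (Ps i) \<inter> interior P))"
  defines "\<phi> \<equiv> similarity a k Q"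
    and "hs \<equiv> \<lambda>i. similarity a k Q \<circ> gs i \<circ> similarity b (1/k) (transpose Q)"
  shows "frontier (\<Union>i<n. hs i ` \<phi> ` Ps i) \<subseteq>
    (\<Union>i<n. hs i ` closure (frontier (\<phi> ` Ps i) \<inter> interior (\<phi> ` P)))"
proof -
  have moved: "hs i ` \<phi> ` X = \<phi> ` gs i ` X" for i X
    unfolding hs_def \<phi>_def using inv by (rule image_comp_inverse)
  have "frontier (\<Union>i<n. hs i ` \<phi> ` Ps i) = \<phi> ` frontier (\<Union>i<n. gs i ` Ps i)"
    unfolding moved unfolding \<phi>_def by (simp add: Q frontier_similarity_image flip: image_UN)
  also have "\<dots> \<subseteq> \<phi> ` (\<Union>i<n. gs i ` closure (frontier (Ps i) \<inter> interior P))"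
    using cuts by (rule image_mono)
  also have "\<dots> = (\<Union>i<n. hs i ` closure (frontier (\<phi> ` Ps i) \<inter> interior (\<phi> ` P)))"
    unfolding \<phi>_def
    by (simp add: Q moved[unfolded \<phi>_def] image_UN interior_similarity_image closure_similarity_image
        frontier_similarity_image similarity_image_Int)
  finally show ?thesis .
qed

lemma inside_out_dissection_similarity_image:
  assumes Q: "orthogonal_matrix Q" "k \<noteq> 0"
    and inv: "\<And>x. similarity b (1/k) (transpose Q) (similarity a k Q x) = x"
    and D: "inside_out_dissection P n Ps gs"
  defines "\<phi> \<equiv> similarity a k Q"
    and "hs \<equiv> \<lambda>i. similarity a k Q \<circ> gs i \<circ> similarity b (1/k) (transpose Q)"
  shows "inside_out_dissection (\<phi> ` P) n (\<lambda>i. \<phi> ` Ps i) hs"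
proof -
  have poly: "\<forall>i<n. polyhedron (Ps i)"
    and disj: "\<forall>i<n. \<forall>j<n. i \<noteq> j \<longrightarrow> interior (Ps i) \<inter> interior (Ps j) = {}"
    and union: "(\<Union>i<n. Ps i) = P"
    and rigid: "\<forall>i<n. rigid_motion (gs i)"
    and disj_moved: "\<forall>i<n. \<forall>j<n. i \<noteq> j \<longrightarrow> interior (gs i ` Ps i) \<inter> interior (gs j ` Ps j) = {}"
    and congr: "congruent P (\<Union>i<n. gs i ` Ps i)"
    and cuts: "frontier (\<Union>i<n. gs i ` Ps i) \<subseteq> (\<Union>i<n. gs i ` closure (frontier (Ps i) \<inter> interior P))"
    using D unfolding inside_out_dissection_def by auto
  have moved: "hs i ` \<phi> ` X = \<phi> ` gs i ` X" for i X
    unfolding hs_def \<phi>_def using inv by (rule image_comp_inverse)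
  have interior_Int: "interior (\<phi> ` X) \<inter> interior (\<phi> ` Y) = \<phi> ` (interior X \<inter> interior Y)" for X Y
    unfolding \<phi>_def by (simp add: Q interior_similarity_image similarity_image_Int)
  show ?thesis
    unfolding inside_out_dissection_def
  proof (intro conjI allI impI)
    fix i assume "i < n"
    then show "polyhedron (\<phi> ` Ps i)"
      using poly polyhedron_similarity_image[OF Q] unfolding \<phi>_def by blast
    show "rigid_motion (hs i)"
      using rigid \<open>i < n\<close> rigid_motion_conj_similarity[OF Q] unfolding hs_def by blast
  next
    fix i j assume "i < n" "j < n" "i \<noteq> j"
    then show "interior (\<phi> ` Ps i) \<inter> interior (\<phi> ` Ps j) = {}"
      and "interior (hs i ` \<phi> ` Ps i) \<inter> interior (hs j ` \<phi> ` Ps j) = {}"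
      using disj disj_moved by (simp_all add: moved interior_Int)
  next
    show "(\<Union>i<n. \<phi> ` Ps i) = \<phi> ` P"
      using union by (simp flip: image_UN)
    show "congruent (\<phi> ` P) (\<Union>i<n. hs i ` \<phi> ` Ps i)"
      using congruent_similarity_image[OF Q congr] unfolding moved unfolding \<phi>_def
      by (simp flip: image_UN)
    show "frontier (\<Union>i<n. hs i ` \<phi> ` Ps i) \<subseteq>
        (\<Union>i<n. hs i ` closure (frontier (\<phi> ` Ps i) \<inter> interior (\<phi> ` P)))"
      unfolding hs_def \<phi>_def by (rule internal_cuts_similarity_image[OF Q inv cuts])
  qed
qed

lemma inside_out_dissectable_similarity_image:
  assumes Q: "orthogonal_matrix Q" "k \<noteq> 0" and "inside_out_dissectable P n"
  shows "inside_out_dissectable (similarity a k Q ` P) n"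
proof -
  obtain b where "\<And>x. similarity b (1/k) (transpose Q) (similarity a k Q x) = x"
    using similarity_inverse[OF Q] by blast
  then show ?thesis
    using assms(3) inside_out_dissection_similarity_image[OF Q]
    unfolding inside_out_dissectable_def by blast
qed

section \<open>Barycentric coordinates and the cells\<close>

(* bary m x is the m-th barycentric coordinate of x, scaled by 4, with respect to the regular
   tetrahedron with vertices 0, (4,4,0), (4,0,4), (0,4,4). *)
definition bary_normal :: "nat \<Rightarrow> real^3" where
  "bary_normal m =
     (if m = 0 then vector [-1/2, -1/2, -1/2] else if m = 1 then vector [1/2, 1/2, -1/2]
      else if m = 2 then vector [1/2, -1/2, 1/2] else vector [-1/2, 1/2, 1/2])"

definition bary :: "nat \<Rightarrow> real^3 \<Rightarrow> real" where
  "bary m x = bary_normal m \<bullet> x + (if m = 0 then 4 else 0)"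

lemma bary_components:
  "bary 0 x = 4 - (x$1 + x$2 + x$3) / 2" "bary 1 x = (x$1 + x$2 - x$3) / 2"
  "bary 2 x = (x$1 - x$2 + x$3) / 2" "bary 3 x = (x$2 + x$3 - x$1) / 2"
  by (simp_all add: bary_def bary_normal_def inner_vec_def sum_3 vector_3 field_simps)

(* The simplifier normalises the index 1 to Suc 0. *)
lemma bary_Suc_0: "bary (Suc 0) x = (x$1 + x$2 - x$3) / 2"
  using bary_components(2) by simp

lemma bary_sum: "bary 0 x + bary 1 x + bary 2 x + bary 3 x = 4"
  unfolding bary_components by (simp add: field_simps)

lemma bary_normal_nonzero: "bary_normal m \<noteq> 0"
  by (auto simp: bary_normal_def vec_eq_iff forall_3 vector_3)

lemma bary_level_sets:
  "{x. bary m x \<le> c} = {x. bary_normal m \<bullet> x \<le> c - bary m 0}"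
  "{x. c \<le> bary m x} = {x. bary_normal m \<bullet> x \<ge> c - bary m 0}"
  "{x. bary m x = c} = {x. bary_normal m \<bullet> x = c - bary m 0}"
  by (auto simp: bary_def)

lemma interior_bary_le: "interior {x. bary m x \<le> c} = {x. bary m x < c}"
  by (simp add: bary_level_sets bary_normal_nonzero) (auto simp: bary_def)

lemma interior_bary_ge: "interior {x. c \<le> bary m x} = {x. c < bary m x}"
  by (simp add: bary_level_sets bary_normal_nonzero) (auto simp: bary_def)

lemma bary_point:
  assumes "\<nu> 0 + \<nu> 1 + \<nu> 2 + \<nu> 3 = 4"
  shows "\<exists>x. \<forall>m<4. bary m x = \<nu> m"
proof -
  have "\<forall>m<4. bary m (vector [\<nu> 1 + \<nu> 2, \<nu> 1 + \<nu> 3, \<nu> 2 + \<nu> 3]) = \<nu> m"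
    using assms unfolding all_nat_less_4 bary_components by (simp add: vector_3 field_simps)
  then show ?thesis ..
qed

definition bary_box :: "(nat \<Rightarrow> real) \<Rightarrow> (nat \<Rightarrow> real) \<Rightarrow> (real^3) set" where
  "bary_box lo hi = {x. \<forall>m<4. lo m \<le> bary m x \<and> bary m x \<le> hi m}"

lemma bary_box_Int:
  "bary_box lo hi =
     {x. lo 0 \<le> bary 0 x} \<inter> {x. bary 0 x \<le> hi 0} \<inter> {x. lo 1 \<le> bary 1 x} \<inter> {x. bary 1 x \<le> hi 1} \<inter>
     {x. lo 2 \<le> bary 2 x} \<inter> {x. bary 2 x \<le> hi 2} \<inter> {x. lo 3 \<le> bary 3 x} \<inter> {x. bary 3 x \<le> hi 3}"
  by (auto simp: bary_box_def all_nat_less_4)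

lemma interior_bary_box:
  "interior (bary_box lo hi) = {x. \<forall>m<4. lo m < bary m x \<and> bary m x < hi m}"
  unfolding bary_box_Int interior_Int interior_bary_le interior_bary_ge
  by (auto simp: all_nat_less_4)

lemma polyhedron_bary_box: "Polytope.polyhedron (bary_box lo hi)"
  unfolding bary_box_Int bary_level_sets
  by (intro polyhedron_Int polyhedron_halfspace_le polyhedron_halfspace_ge)

lemma convex_bary_box: "convex (bary_box lo hi)"
  using polyhedron_bary_box polyhedron_imp_convex by blast

lemma closed_bary_box: "closed (bary_box lo hi)"
  using polyhedron_bary_box polyhedron_imp_closed by blast

definition base_tetrahedron :: "(real^3) set" where
  "base_tetrahedron = {x. \<forall>m<4. 0 \<le> bary m x}"

lemma base_tetrahedron_bary_box: "base_tetrahedron = bary_box (\<lambda>_. 0) (\<lambda>_. 4)"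
proof -
  have "bary m x \<le> 4" if "\<forall>k<4. 0 \<le> bary k x" "m < 4" for m x
    using that bary_sum[of x] nat_less_4_cases[of m] unfolding all_nat_less_4 by auto
  then show ?thesis
    unfolding base_tetrahedron_def bary_box_def by blast
qed

lemma interior_base_tetrahedron: "interior base_tetrahedron = {x. \<forall>m<4. 0 < bary m x}"
proof -
  have "bary m x < 4" if "\<forall>k<4. 0 < bary k x" "m < 4" for m x
    using that bary_sum[of x] nat_less_4_cases[of m] unfolding all_nat_less_4 by auto
  then show ?thesis
    unfolding base_tetrahedron_bary_box interior_bary_box by blast
qed

lemma frontier_base_tetrahedron:
  "frontier base_tetrahedron = {x \<in> base_tetrahedron. \<exists>m<4. bary m x = 0}"
  using closed_bary_box[of "\<lambda>_. 0" "\<lambda>_. 4"]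
  unfolding frontier_def interior_base_tetrahedron base_tetrahedron_bary_box[symmetric]
  by (auto simp: base_tetrahedron_def order_less_le)

definition base_vertices :: "(real^3) set" where
  "base_vertices = {0, vector [4, 4, 0], vector [4, 0, 4], vector [0, 4, 4]}"

lemma base_tetrahedron_hull: "base_tetrahedron = convex hull base_vertices"
proof
  have "base_vertices \<subseteq> base_tetrahedron"
    unfolding base_vertices_def base_tetrahedron_def all_nat_less_4 bary_components
    by (simp add: vector_3)
  then show "convex hull base_vertices \<subseteq> base_tetrahedron"
    using convex_bary_box base_tetrahedron_bary_box by (metis hull_minimal)
  show "base_tetrahedron \<subseteq> convex hull base_vertices"
  proof
    fix x assume "x \<in> base_tetrahedron"
    then have nonneg: "0 \<le> bary 0 x" "0 \<le> bary 1 x" "0 \<le> bary 2 x" "0 \<le> bary 3 x"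
      by (auto simp: base_tetrahedron_def all_nat_less_4)
    define p1 p2 p3 :: "real^3" where
      "p1 = vector [4, 4, 0]" and "p2 = vector [4, 0, 4]" and "p3 = vector [0, 4, 4]"
    have distinct: "distinct [0, p1, p2, p3]"
      by (auto simp: p1_def p2_def p3_def vec_eq_iff forall_3 vector_3)
    define u where "u y = (if y = 0 then bary 0 x else if y = p1 then bary 1 x
      else if y = p2 then bary 2 x else bary 3 x) / 4" for y
    have u: "u 0 = bary 0 x / 4" "u p1 = bary 1 x / 4" "u p2 = bary 2 x / 4" "u p3 = bary 3 x / 4"
      using distinct by (auto simp: u_def)
    have "sum u {0, p1, p2, p3} = 1"
      using distinct u bary_sum[of x] by simp
    moreover have "(\<Sum>y\<in>{0, p1, p2, p3}. u y *\<^sub>R y) = x"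
      using distinct u unfolding bary_components
      by (simp add: vec_eq_iff forall_3 p1_def p2_def p3_def vector_3 field_simps)
    moreover have "\<forall>y\<in>{0, p1, p2, p3}. 0 \<le> u y"
      using nonneg u by auto
    ultimately show "x \<in> convex hull base_vertices"
      unfolding base_vertices_def p1_def[symmetric] p2_def[symmetric] p3_def[symmetric]
      by (subst convex_hull_finite) auto
  qed
qed

lemma compact_base_tetrahedron: "compact base_tetrahedron"
  unfolding base_tetrahedron_hull base_vertices_def
  by (intro finite_imp_compact_convex_hull) simp

definition label_sum :: "int list \<Rightarrow> int" where
  "label_sum f = f!0 + f!1 + f!2 + f!3"

(* The labels with sum 3, 2 and 1 are those of the 20 small tetrahedra, the 10 octahedra and
   the 4 inverted tetrahedra into which the planes bary m = integer cut the base tetrahedron. *)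
definition cell_label :: "int list \<Rightarrow> bool" where
  "cell_label f \<longleftrightarrow> length f = 4 \<and> (\<forall>m<4. 0 \<le> f!m) \<and> 1 \<le> label_sum f \<and> label_sum f \<le> 3"

definition cell :: "int list \<Rightarrow> (real^3) set" where
  "cell f = bary_box (\<lambda>m. of_int (f!m)) (\<lambda>m. of_int (f!m) + 1)"

lemma cell_subset_base_tetrahedron: "\<forall>m<4. 0 \<le> f!m \<Longrightarrow> cell f \<subseteq> base_tetrahedron"
  unfolding cell_def bary_box_def base_tetrahedron_def by force

lemma polyhedron_cell:
  assumes "cell_label f"
  shows "polyhedron (cell f)"
proof (rule polyhedron_if_polytope)
  have "bounded (cell f)"
    using assms cell_subset_base_tetrahedron compact_base_tetrahedron
    by (meson bounded_subset compact_imp_bounded cell_label_def)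
  then show "polytope (cell f)"
    unfolding cell_def using polyhedron_bary_box polytope_eq_bounded_polyhedron by blast
  define r :: real where "r = (4 - of_int (label_sum f)) / 4"
  have r: "0 < r" "r < 1"
    using assms by (auto simp: cell_label_def r_def)
  have "(of_int (f!0) + r) + (of_int (f!1) + r) + (of_int (f!2) + r) + (of_int (f!3) + r) = 4"
    by (simp add: r_def label_sum_def field_simps)
  then obtain x where "\<forall>m<4. bary m x = of_int (f!m) + r"
    using bary_point[of "\<lambda>m. of_int (f!m) + r"] by blast
  then have "x \<in> interior (cell f)"
    using r unfolding cell_def interior_bary_box by auto
  then show "interior (cell f) \<noteq> {}" by blast
qed

lemma interior_cells_disjoint:
  assumes "length f = 4" "length g = 4" "f \<noteq> g"
  shows "interior (cell f) \<inter> interior (cell g) = {}"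
proof (rule ccontr)
  assume "interior (cell f) \<inter> interior (cell g) \<noteq> {}"
  then obtain x where x: "x \<in> interior (cell f)" "x \<in> interior (cell g)" by blast
  have "f!m = g!m" if "m < 4" for m
  proof -
    have "of_int (f!m) < bary m x" "bary m x < of_int (f!m) + 1"
      "of_int (g!m) < bary m x" "bary m x < of_int (g!m) + 1"
      using x that unfolding cell_def interior_bary_box by auto
    then have "f!m < g!m + 1" "g!m < f!m + 1" by linarith+
    then show ?thesis by simp
  qed
  then show False
    using assms by (metis nth_equalityI)
qed

lemma floor_sum_4:
  fixes b :: "nat \<Rightarrow> real"
  assumes sum: "b 0 + b 1 + b 2 + b 3 = 4"
  defines "S \<equiv> \<lfloor>b 0\<rfloor> + \<lfloor>b 1\<rfloor> + \<lfloor>b 2\<rfloor> + \<lfloor>b 3\<rfloor>"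
  shows "0 < S" "S \<le> 4" "m < 4 \<Longrightarrow> b m = 0 \<Longrightarrow> 2 \<le> S"
    "S = 4 \<Longrightarrow> m < 4 \<Longrightarrow> b m = of_int \<lfloor>b m\<rfloor>"
proof -
  have floor_bounds: "of_int \<lfloor>b m\<rfloor> \<le> b m" "b m < of_int \<lfloor>b m\<rfloor> + 1" for m
    by linarith+
  note bounds = sum floor_bounds[of 0] floor_bounds[of 1] floor_bounds[of 2] floor_bounds[of 3]
  show "0 < S" "S \<le> 4"
    using bounds unfolding S_def by linarith+
  show "2 \<le> S" if "m < 4" "b m = 0"
    using nat_less_4_cases[OF that(1)] that(2) bounds unfolding S_def by (elim disjE) (simp; linarith)+
  assume "S = 4" "m < 4"
  then have "of_int \<lfloor>b 0\<rfloor> + of_int \<lfloor>b 1\<rfloor> + of_int \<lfloor>b 2\<rfloor> + of_int \<lfloor>b 3\<rfloor> = (4::real)"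
    unfolding S_def by (metis of_int_add of_int_numeral)
  then show "b m = of_int \<lfloor>b m\<rfloor>"
    using nat_less_4_cases[OF \<open>m < 4\<close>] bounds by (elim disjE; hypsubst; linarith)
qed

lemma exists_cell_label:
  fixes b :: "nat \<Rightarrow> real"
  assumes nonneg: "\<forall>m<4. 0 \<le> b m" and sum: "b 0 + b 1 + b 2 + b 3 = 4"
  shows "\<exists>f. cell_label f \<and> (\<forall>m<4. of_int (f!m) \<le> b m \<and> b m \<le> of_int (f!m) + 1)
           \<and> ((\<exists>m<4. b m = 0) \<longrightarrow> 2 \<le> label_sum f)"
proof -
  define S where "S = \<lfloor>b 0\<rfloor> + \<lfloor>b 1\<rfloor> + \<lfloor>b 2\<rfloor> + \<lfloor>b 3\<rfloor>"
  note S_bounds = floor_sum_4[OF sum, folded S_def]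
  have floor_nonneg: "0 \<le> \<lfloor>b m\<rfloor>" if "m < 4" for m
    using nonneg that by simp
  show ?thesis
  proof (cases "S \<le> 3")
    case True
    define f where "f = [\<lfloor>b 0\<rfloor>, \<lfloor>b 1\<rfloor>, \<lfloor>b 2\<rfloor>, \<lfloor>b 3\<rfloor>]"
    have "cell_label f" "label_sum f = S"
      using True S_bounds floor_nonneg
      unfolding cell_label_def label_sum_def S_def f_def all_nat_less_4 by auto
    moreover have "\<forall>m<4. of_int (f!m) \<le> b m \<and> b m \<le> of_int (f!m) + 1"
      unfolding f_def all_nat_less_4 by (simp add: less_imp_le)
    ultimately show ?thesis
      using S_bounds(3) by blast
  next
    case False
    then have "S = 4" using S_bounds by simp
    then have integral: "b m = of_int \<lfloor>b m\<rfloor>" if "m < 4" for m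
      using S_bounds(4) that by blast
    have "\<exists>j<4. 1 \<le> \<lfloor>b j\<rfloor>"
      using \<open>S = 4\<close> unfolding S_def ex_nat_less_4 by linarith
    then obtain j where j: "j < 4" "1 \<le> \<lfloor>b j\<rfloor>" by blast
    define f where "f = map (\<lambda>m. \<lfloor>b m\<rfloor> - (if m = j then 1 else 0)) [0..<4]"
    have f_nth: "f!m = \<lfloor>b m\<rfloor> - (if m = j then 1 else 0)" if "m < 4" for m
      using that by (simp add: f_def)
    have "label_sum f = 3"
      using f_nth[of 0] f_nth[of 1] f_nth[of 2] f_nth[of 3] nat_less_4_cases[OF j(1)] \<open>S = 4\<close>
      unfolding label_sum_def S_def by auto
    then have "cell_label f"
      using floor_nonneg j f_nth by (auto simp: cell_label_def f_def)
    moreover have "\<forall>m<4. of_int (f!m) \<le> b m \<and> b m \<le> of_int (f!m) + 1"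
      using integral f_nth by simp
    ultimately show ?thesis
      using \<open>label_sum f = 3\<close> by auto
  qed
qed

lemma exists_face_point:
  assumes nonneg: "\<forall>k<4. 0 \<le> f!k" and j: "j < 4"
    and d: "d = 0 \<or> d = 1" and pos: "0 < f!j + d" and room: "label_sum f + d \<le> 3"
  shows "\<exists>\<nu> :: nat \<Rightarrow> real. \<nu> j = of_int (f!j + d) \<and> \<nu> 0 + \<nu> 1 + \<nu> 2 + \<nu> 3 = 4 \<and>
           (\<forall>k<4. of_int (f!k) \<le> \<nu> k \<and> \<nu> k \<le> of_int (f!k) + 1 \<and> 0 < \<nu> k)"
proof -
  define r :: real where "r = (4 - of_int (label_sum f + d)) / 3"
  have "1 \<le> label_sum f + d"
    using nat_less_4_cases[OF j] nonneg pos unfolding label_sum_def all_nat_less_4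
    by (elim disjE) auto
  then have r: "0 < r" "r \<le> 1"
    using room unfolding r_def by simp_all
  define \<nu> where "\<nu> k = (if k = j then of_int (f!j + d) else of_int (f!k) + r)" for k
  have "\<nu> 0 + \<nu> 1 + \<nu> 2 + \<nu> 3 = of_int (label_sum f + d) + 3 * r"
    using nat_less_4_cases[OF j] unfolding \<nu>_def label_sum_def by auto
  also have "\<dots> = 4"
    unfolding r_def by (simp add: field_simps)
  finally have "\<nu> 0 + \<nu> 1 + \<nu> 2 + \<nu> 3 = 4" .
  moreover have "of_int (f!k) \<le> \<nu> k \<and> \<nu> k \<le> of_int (f!k) + 1 \<and> 0 < \<nu> k" if "k < 4" for k
  proof (cases "k = j")
    case True
    then show ?thesis using d pos unfolding \<nu>_def by auto
  next
    case False
    then show ?thesis using nonneg that r unfolding \<nu>_def by auto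
  qed
  ultimately show ?thesis
    by (intro exI[of _ \<nu>]) (simp add: \<nu>_def)
qed

lemma mem_closure_internal_frontier_cell:
  assumes l: "l \<in> cell f" "bary j l = of_int (f!j + d)"
    and nonneg: "\<forall>k<4. 0 \<le> f!k" and j: "j < 4"
    and d: "d = 0 \<or> d = 1" and pos: "0 < f!j + d" and room: "label_sum f + d \<le> 3"
  shows "l \<in> closure (frontier (cell f) \<inter> interior base_tetrahedron)"
proof -
  define face where "face = cell f \<inter> {x. bary j x = of_int (f!j + d)}"
  obtain \<nu> :: "nat \<Rightarrow> real" where \<nu>: "\<nu> j = of_int (f!j + d)" "\<nu> 0 + \<nu> 1 + \<nu> 2 + \<nu> 3 = 4"
    "\<forall>k<4. of_int (f!k) \<le> \<nu> k \<and> \<nu> k \<le> of_int (f!k) + 1 \<and> 0 < \<nu> k"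
    using exists_face_point[OF nonneg j d pos room] by blast
  obtain q where q: "\<forall>m<4. bary m q = \<nu> m"
    using bary_point[OF \<nu>(2)] by blast
  have "convex face"
    unfolding face_def cell_def bary_level_sets
    by (intro convex_Int convex_bary_box convex_hyperplane)
  moreover have "q \<in> face" "q \<in> interior base_tetrahedron"
    using q \<nu> j unfolding face_def cell_def bary_box_def interior_base_tetrahedron by auto
  moreover have "l \<in> face" "l \<in> closure base_tetrahedron"
    using l cell_subset_base_tetrahedron[OF nonneg] closure_subset unfolding face_def by auto
  ultimately have "l \<in> closure (face \<inter> interior base_tetrahedron)"
    using mem_closure_Int_interior_convex convex_bary_box base_tetrahedron_bary_box by metis
  moreover have "face \<subseteq> frontier (cell f)"
    using j d closed_bary_box
    unfolding face_def frontier_def cell_def interior_bary_box by auto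
  ultimately show ?thesis
    by (meson closure_mono inf_mono order_refl subsetD)
qed

section \<open>Moving cells\<close>

(* For label_sum t = 0, Shift t is the translation adding t!m to the m-th barycentric
   coordinate; for label_sum t = 8, Turn t is the half-turn about an axis parallel to (1,1,0)
   that replaces the coordinates b by t - b \<circ> swap01 (lemmas bary_shift and bary_turn). *)
datatype move = Shift "int list" | Turn "int list"

definition half_turn :: "real^3^3" where
  "half_turn = vector [vector [0, 1, 0], vector [1, 0, 0], vector [0, 0, -1]]"

definition shift_vector :: "int list \<Rightarrow> real^3" where
  "shift_vector t = vector [of_int (t!1 + t!2), of_int (t!1 + t!3), of_int (t!2 + t!3)]"

definition turn_offset :: "int list \<Rightarrow> real^3" where
  "turn_offset t = vector [of_int (t!1 + t!2) - 4, of_int (t!1 + t!3) - 4, of_int (t!2 + t!3)]"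

fun move_map :: "move \<Rightarrow> real^3 \<Rightarrow> real^3" where
  "move_map (Shift t) x = x + shift_vector t"
| "move_map (Turn t) x = half_turn *v x + turn_offset t"

definition swap01 :: "nat \<Rightarrow> nat" where
  "swap01 m = (if m = 0 then 1 else if m = 1 then 0 else m)"

fun move_label :: "move \<Rightarrow> int list \<Rightarrow> int list" where
  "move_label (Shift t) f = [f!0 + t!0, f!1 + t!1, f!2 + t!2, f!3 + t!3]"
| "move_label (Turn t) f = [t!0 - f!1 - 1, t!1 - f!0 - 1, t!2 - f!2 - 1, t!3 - f!3 - 1]"

(* A shift may put a cell onto the face bary m = 0 only if the original cell avoids that face,
   so that the part of the boundary it covers comes from an internal face. *)
fun admissible_move :: "move \<Rightarrow> int list \<Rightarrow> bool" where
  "admissible_move (Shift t) f \<longleftrightarrow>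
     label_sum t = 0 \<and> (\<forall>m<4. move_label (Shift t) f ! m = 0 \<longrightarrow> 1 \<le> f!m)"
| "admissible_move (Turn t) f \<longleftrightarrow> label_sum t = 8"

lemma half_turn_apply: "half_turn *v x = vector [x$2, x$1, - x$3]"
  by (simp add: half_turn_def vec_eq_iff forall_3 matrix_vector_mult_def sum_3 vector_3)

lemma orthogonal_matrix_half_turn: "orthogonal_matrix half_turn"
  by (simp add: orthogonal_matrix_def half_turn_def vec_eq_iff forall_3 matrix_matrix_mult_def
      sum_3 vector_3 transpose_def mat_def)

lemma det_half_turn: "det half_turn = 1"
  by (simp add: det_3 half_turn_def vector_3)

lemma move_label_nth:
  "m < 4 \<Longrightarrow> move_label (Shift t) f ! m = f!m + t!m"
  "m < 4 \<Longrightarrow> move_label (Turn t) f ! m = t!m - f!(swap01 m) - 1"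
  by (auto simp: swap01_def less_Suc_eq numeral_eq_Suc)

lemma label_sum_move_label_Turn:
  "label_sum (move_label (Turn t) f) = label_sum t - label_sum f - 4"
  by (simp add: label_sum_def)

lemma bary_shift:
  assumes "label_sum t = 0" "m < 4"
  shows "bary m (x + shift_vector t) = bary m x + of_int (t!m)"
proof -
  have "of_int (t!0) = - (of_int (t!1) + of_int (t!2) + of_int (t!3) :: real)"
    using arg_cong[OF assms(1), of real_of_int] by (simp add: label_sum_def)
  then show ?thesis
    using nat_less_4_cases[OF assms(2)] unfolding shift_vector_def
    by (elim disjE) (simp_all add: bary_components bary_Suc_0 vector_3 field_simps)
qed

lemma bary_turn:
  assumes "label_sum t = 8" "m < 4"
  shows "bary m (half_turn *v x + turn_offset t) = of_int (t!m) - bary (swap01 m) x"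
proof -
  have "of_int (t!0) = 8 - (of_int (t!1) + of_int (t!2) + of_int (t!3) :: real)"
    using arg_cong[OF assms(1), of real_of_int] by (simp add: label_sum_def)
  then show ?thesis
    using nat_less_4_cases[OF assms(2)] unfolding half_turn_apply turn_offset_def swap01_def
    by (elim disjE) (simp_all add: bary_components bary_Suc_0 vector_3 field_simps)
qed

lemma all_swap01: "(\<forall>m<4. P (swap01 m)) \<longleftrightarrow> (\<forall>m<4. P m)"
  by (auto simp: all_nat_less_4 swap01_def)

lemma move_map_mem_cell_iff:
  assumes "admissible_move mv f"
  shows "move_map mv x \<in> cell (move_label mv f) \<longleftrightarrow> x \<in> cell f"
proof (cases mv)
  case (Shift t)
  have "label_sum t = 0"
    using assms Shift by simp
  then have "(of_int (move_label mv f ! m) \<le> bary m (move_map mv x) \<and>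
        bary m (move_map mv x) \<le> of_int (move_label mv f ! m) + 1) \<longleftrightarrow>
      (of_int (f!m) \<le> bary m x \<and> bary m x \<le> of_int (f!m) + 1)" if "m < 4" for m
    using that by (simp add: Shift bary_shift move_label_nth del: move_label.simps)
  then show ?thesis
    unfolding cell_def bary_box_def by auto
next
  case (Turn t)
  have "label_sum t = 8"
    using assms Turn by simp
  then have "(of_int (move_label mv f ! m) \<le> bary m (move_map mv x) \<and>
        bary m (move_map mv x) \<le> of_int (move_label mv f ! m) + 1) \<longleftrightarrow>
      (of_int (f ! swap01 m) \<le> bary (swap01 m) x \<and> bary (swap01 m) x \<le> of_int (f ! swap01 m) + 1)"
    if "m < 4" for m
    using that by (simp add: Turn bary_turn move_label_nth del: move_label.simps) linarith
  then show ?thesis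
    unfolding cell_def bary_box_def
    using all_swap01[of "\<lambda>m. of_int (f!m) \<le> bary m x \<and> bary m x \<le> of_int (f!m) + 1"] by auto
qed

lemma surj_move_map: "surj (move_map mv)"
proof (cases mv)
  case (Shift t)
  show ?thesis
    by (rule surjI[of _ "\<lambda>y. y - shift_vector t"]) (simp add: Shift)
next
  case (Turn t)
  have "half_turn *v (half_turn *v y) = y" for y
    by (simp add: half_turn_apply vec_eq_iff forall_3 vector_3)
  then show ?thesis
    by (intro surjI[of _ "\<lambda>y. half_turn *v (y - turn_offset t)"])
      (simp add: Turn matrix_vector_mult_diff_distrib)
qed

lemma move_map_image_cell:
  assumes "admissible_move mv f"
  shows "move_map mv ` cell f = cell (move_label mv f)"
proof -
  have "move_map mv -` cell (move_label mv f) = cell f"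
    using move_map_mem_cell_iff[OF assms] by auto
  then show ?thesis
    using surj_move_map surj_image_vimage_eq by metis
qed

lemma rigid_motion_move_map: "rigid_motion (move_map mv)"
proof (cases mv)
  case (Shift t)
  then show ?thesis
    unfolding rigid_motion_def
    by (intro exI[of _ "mat 1"] exI[of _ "shift_vector t"]) (simp add: orthogonal_matrix_id)
next
  case (Turn t)
  then show ?thesis
    unfolding rigid_motion_def using orthogonal_matrix_half_turn det_half_turn by auto
qed

lemma mem_closure_internal_frontier_preimage:
  assumes mv: "admissible_move mv f" and f: "cell_label f" and l: "l \<in> cell f"
    and m: "m < 4" "bary m (move_map mv l) = 0" "move_label mv f ! m = 0"
    and sum: "2 \<le> label_sum (move_label mv f)"
  shows "l \<in> closure (frontier (cell f) \<inter> interior base_tetrahedron)"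
proof -
  have nonneg: "\<forall>k<4. 0 \<le> f!k" and room: "label_sum f \<le> 3"
    using f by (auto simp: cell_label_def)
  show ?thesis
  proof (cases mv)
    case (Shift t)
    have "label_sum t = 0" "1 \<le> f!m" "f!m + t!m = 0"
      using mv m Shift by (auto simp: move_label_nth simp del: move_label.simps)
    moreover have "bary m l = of_int (f!m + 0)"
      using m calculation Shift by (simp add: bary_shift)
    ultimately show ?thesis
      using mem_closure_internal_frontier_cell[OF l(1) _ nonneg m(1)] room by simp
  next
    case (Turn t)
    have "label_sum t = 8" "t!m - f ! swap01 m - 1 = 0"
      using mv m Turn by (auto simp: move_label_nth simp del: move_label.simps)
    moreover have "bary (swap01 m) l = of_int (f ! swap01 m + 1)"
      using m calculation Turn by (simp add: bary_turn)
    moreover have "label_sum f + 1 \<le> 3"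
      using sum \<open>label_sum t = 8\<close> Turn label_sum_move_label_Turn[of t f] by simp
    moreover have "swap01 m < 4" "0 \<le> f ! swap01 m"
      using m nonneg by (auto simp: swap01_def)
    ultimately show ?thesis
      using mem_closure_internal_frontier_cell[OF l(1) _ nonneg, of "swap01 m" 1] by simp
  qed
qed

section \<open>The dissection of the base tetrahedron\<close>

definition source_labels :: "int list list" where
  "source_labels = [[a, b, c, d]. a \<leftarrow> [0..3], b \<leftarrow> [0..3], c \<leftarrow> [0..3], d \<leftarrow> [0..3],
     1 \<le> a + b + c + d \<and> a + b + c + d \<le> 3]"

definition moves :: "move list" where
  "moves =
     [Turn [1,1,1,5], Turn [1,1,1,5], Turn [1,1,1,5], Turn [1,1,5,1], Turn [1,1,3,3],
      Shift [2,1,-1,-2], Turn [1,1,5,1], Shift [1,2,-2,-1], Turn [1,1,5,1], Turn [2,4,1,1],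
      Turn [2,2,1,3], Shift [1,-1,2,-2], Turn [2,2,3,1], Shift [1,-1,-1,1], Shift [2,-1,-2,1],
      Turn [3,3,1,1], Shift [2,-2,1,-1], Shift [1,-1,-1,1], Turn [4,2,1,1], Turn [4,2,1,1],
      Turn [2,2,1,3], Shift [0,1,1,-2], Turn [2,2,3,1], Shift [-1,1,1,-1], Shift [-1,1,-2,2],
      Turn [3,3,1,1], Shift [-1,0,1,0], Shift [-1,-1,1,1], Shift [0,-2,1,1], Turn [3,3,1,1],
      Shift [-2,2,1,-1], Shift [-2,2,-1,1], Shift [-2,-1,1,2], Turn [2,4,1,1]]"

definition target_labels :: "int list list" where
  "target_labels = map2 move_label moves source_labels"

lemma length_source_labels: "length source_labels = 34" by code_simp
lemma length_moves: "length moves = 34" by code_simp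
lemma length_target_labels: "length target_labels = 34" by code_simp
lemma distinct_source_labels: "distinct source_labels" by code_simp
lemma distinct_target_labels: "distinct target_labels" by code_simp
lemma set_target_labels: "set target_labels = set source_labels" by code_simp
lemma moves_admissible: "list_all2 admissible_move moves source_labels" by code_simp
lemma source_labels_cell_label: "list_all cell_label source_labels" by code_simp

lemma set_source_labels: "set source_labels = {f. cell_label f}"
proof
  show "set source_labels \<subseteq> {f. cell_label f}"
    using source_labels_cell_label by (auto simp: list_all_iff)
  show "{f. cell_label f} \<subseteq> set source_labels"
  proof
    fix f assume "f \<in> {f. cell_label f}"
    then have len: "length f = 4" and nonneg: "\<forall>m<4. 0 \<le> f!m"
      and sum: "1 \<le> label_sum f" "label_sum f \<le> 3"
      by (auto simp: cell_label_def)
    have f: "f = [f!0, f!1, f!2, f!3]"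
      using len by (simp add: list_eq_iff_nth_eq all_nat_less_4 less_Suc_eq numeral_eq_Suc)
    have "f!0 \<in> set [0..3]" "f!1 \<in> set [0..3]" "f!2 \<in> set [0..3]" "f!3 \<in> set [0..3]"
      using nonneg sum unfolding all_nat_less_4 label_sum_def by auto
    then show "f \<in> set source_labels"
      using sum unfolding source_labels_def label_sum_def by (subst f) auto
  qed
qed

lemma cell_label_source_label: "i < 34 \<Longrightarrow> cell_label (source_labels!i)"
  using length_source_labels set_source_labels by (metis mem_Collect_eq nth_mem)

lemma cell_label_target_label: "i < 34 \<Longrightarrow> cell_label (target_labels!i)"
  using length_target_labels set_target_labels set_source_labels by (metis mem_Collect_eq nth_mem)

lemma cells_cover_base_tetrahedron: "(\<Union>f\<in>{f. cell_label f}. cell f) = base_tetrahedron"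
proof
  show "(\<Union>f\<in>{f. cell_label f}. cell f) \<subseteq> base_tetrahedron"
    using cell_subset_base_tetrahedron by (auto simp: cell_label_def)
  show "base_tetrahedron \<subseteq> (\<Union>f\<in>{f. cell_label f}. cell f)"
  proof
    fix x assume "x \<in> base_tetrahedron"
    then obtain f where "cell_label f" "\<forall>m<4. of_int (f!m) \<le> bary m x \<and> bary m x \<le> of_int (f!m) + 1"
      using exists_cell_label[of "\<lambda>m. bary m x"] bary_sum unfolding base_tetrahedron_def by blast
    then show "x \<in> (\<Union>f\<in>{f. cell_label f}. cell f)"
      unfolding cell_def bary_box_def by blast
  qed
qed

lemma admissible_move_nth: "i < 34 \<Longrightarrow> admissible_move (moves!i) (source_labels!i)"
  using moves_admissible length_moves by (simp add: list_all2_nthD)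

lemma target_labels_nth: "i < 34 \<Longrightarrow> target_labels!i = move_label (moves!i) (source_labels!i)"
  using length_moves length_source_labels by (simp add: target_labels_def)

lemma move_map_image_source_cell:
  "i < 34 \<Longrightarrow> move_map (moves!i) ` cell (source_labels!i) = cell (target_labels!i)"
  by (simp add: move_map_image_cell admissible_move_nth target_labels_nth)

lemma source_cells_cover: "(\<Union>i<34. cell (source_labels!i)) = base_tetrahedron"
  using length_source_labels cells_cover_base_tetrahedron
  by (simp add: UN_less_length_nth set_source_labels)

lemma moved_cells_cover: "(\<Union>i<34. move_map (moves!i) ` cell (source_labels!i)) = base_tetrahedron"
  using length_target_labels cells_cover_base_tetrahedron
  by (simp add: move_map_image_source_cell UN_less_length_nth set_target_labels set_source_labels)

lemma frontier_base_tetrahedron_internal_cuts: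
  "frontier base_tetrahedron \<subseteq>
     (\<Union>i<34. move_map (moves!i) `
        closure (frontier (cell (source_labels!i)) \<inter> interior base_tetrahedron))"
proof
  fix y assume "y \<in> frontier base_tetrahedron"
  then obtain m where y: "y \<in> base_tetrahedron" "m < 4" "bary m y = 0"
    unfolding frontier_base_tetrahedron by blast
  \<comment> \<open>A cell of label sum at least 2 that is the image of a half-turn comes from a cell of
    label sum at most 2, whose upper faces are internal.\<close>
  then obtain f where f: "cell_label f" "y \<in> cell f" "2 \<le> label_sum f"
    using exists_cell_label[of "\<lambda>m. bary m y"] bary_sum
    unfolding base_tetrahedron_def cell_def bary_box_def by blast
  have "f \<in> set target_labels"
    using f(1) by (simp add: set_target_labels set_source_labels)
  then obtain i where i: "i < 34" "target_labels!i = f"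
    using length_target_labels by (auto simp: in_set_conv_nth)
  define mv g where "mv = moves!i" and "g = source_labels!i"
  have mv: "admissible_move mv g" "move_label mv g = f"
    using i admissible_move_nth target_labels_nth unfolding mv_def g_def by auto
  have g: "cell_label g"
    unfolding g_def using i(1) by (rule cell_label_source_label)
  obtain l where l: "l \<in> cell g" "y = move_map mv l"
    using f(2) move_map_image_cell[OF mv(1)] mv(2) by blast
  have "f!m = 0"
    using f(1,2) y(2,3) unfolding cell_label_def cell_def bary_box_def by force
  then have "l \<in> closure (frontier (cell g) \<inter> interior base_tetrahedron)"
    using mem_closure_internal_frontier_preimage[OF mv(1) g l(1) y(2)] y(3) l(2) mv(2) f(3) by simp
  then show "y \<in> (\<Union>i<34. move_map (moves!i) `
      closure (frontier (cell (source_labels!i)) \<inter> interior base_tetrahedron))"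
    using i l(2) unfolding mv_def g_def by blast
qed

lemma inside_out_dissection_base_tetrahedron:
  "inside_out_dissection base_tetrahedron 34 (\<lambda>i. cell (source_labels!i)) (\<lambda>i. move_map (moves!i))"
  unfolding inside_out_dissection_def
proof (intro conjI allI impI)
  fix i assume "i < (34::nat)"
  then show "polyhedron (cell (source_labels!i))"
    by (intro polyhedron_cell cell_label_source_label)
next
  fix i j assume ij: "i < (34::nat)" "j < 34" "i \<noteq> j"
  then have "source_labels!i \<noteq> source_labels!j" "target_labels!i \<noteq> target_labels!j"
    using distinct_source_labels distinct_target_labels length_source_labels length_target_labels
    by (simp_all add: nth_eq_iff_index_eq)
  then show "interior (cell (source_labels!i)) \<inter> interior (cell (source_labels!j)) = {}"
    and "interior (move_map (moves!i) ` cell (source_labels!i)) \<inter>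
      interior (move_map (moves!j) ` cell (source_labels!j)) = {}"
    using ij cell_label_source_label cell_label_target_label interior_cells_disjoint
    by (simp_all add: move_map_image_source_cell cell_label_def)
next
  show "congruent base_tetrahedron (\<Union>i<34. move_map (moves!i) ` cell (source_labels!i))"
    unfolding moved_cells_cover congruent_def by (intro exI[of _ id]) simp
next
  show "frontier (\<Union>i<34. move_map (moves!i) ` cell (source_labels!i)) \<subseteq>
      (\<Union>i<34. move_map (moves!i) `
        closure (frontier (cell (source_labels!i)) \<inter> interior base_tetrahedron))"
    unfolding moved_cells_cover by (rule frontier_base_tetrahedron_internal_cuts)
qed (simp_all add: source_cells_cover rigid_motion_move_map)

section \<open>Regular tetrahedra\<close>

lemma norm_equiangular_combination:
  fixes u1 u2 u3 :: "'a::real_inner"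
  assumes "u1 \<bullet> u1 = s\<^sup>2" "u2 \<bullet> u2 = s\<^sup>2" "u3 \<bullet> u3 = s\<^sup>2"
    "u1 \<bullet> u2 = s\<^sup>2 / 2" "u1 \<bullet> u3 = s\<^sup>2 / 2" "u2 \<bullet> u3 = s\<^sup>2 / 2"
  shows "(norm (c1 *\<^sub>R u1 + c2 *\<^sub>R u2 + c3 *\<^sub>R u3))\<^sup>2 =
    s\<^sup>2 * (c1\<^sup>2 + c2\<^sup>2 + c3\<^sup>2 + c1 * c2 + c1 * c3 + c2 * c3)"
  unfolding power2_norm_eq_inner
  by (simp add: inner_add_left inner_add_right assms inner_commute[of u2 u1]
      inner_commute[of u3 u1] inner_commute[of u3 u2] power2_eq_square algebra_simps)

lemma scaled_isometry_matrix:
  fixes L :: "real^'n \<Rightarrow> real^'n"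
  assumes "linear L" "k > 0" "\<And>x. norm (L x) = k * norm x"
  obtains Q where "orthogonal_matrix Q" "\<And>x. L x = k *\<^sub>R (Q *v x)"
proof
  have lin: "linear (\<lambda>x. (1/k) *\<^sub>R L x)"
    using assms(1) by (simp add: linear_compose_scale_right)
  then have "orthogonal_transformation (\<lambda>x. (1/k) *\<^sub>R L x)"
    unfolding orthogonal_transformation using assms(2,3) by simp
  then show "orthogonal_matrix (matrix (\<lambda>x. (1/k) *\<^sub>R L x))"
    by (simp add: orthogonal_transformation_matrix)
  have "matrix (\<lambda>x. (1/k) *\<^sub>R L x) *v x = (1/k) *\<^sub>R L x" for x
    using matrix_vector_mul(2)[OF lin] by metis
  then show "L x = k *\<^sub>R (matrix (\<lambda>x. (1/k) *\<^sub>R L x) *v x)" for x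
    using assms(2) by simp
qed

lemma similarity_onto_regular_vertices:
  fixes a b c d :: "real^3"
  assumes s: "s > 0" "dist a b = s" "dist a c = s" "dist a d = s"
    "dist b c = s" "dist b d = s" "dist c d = s"
  obtains k Q where "orthogonal_matrix Q" "k \<noteq> 0" "similarity a k Q ` base_vertices = {a, b, c, d}"
proof -
  define u1 u2 u3 where "u1 = b - a" and "u2 = c - a" and "u3 = d - a"
  have gram: "u1 \<bullet> u1 = s\<^sup>2" "u2 \<bullet> u2 = s\<^sup>2" "u3 \<bullet> u3 = s\<^sup>2"
    "u1 \<bullet> u2 = s\<^sup>2 / 2" "u1 \<bullet> u3 = s\<^sup>2 / 2" "u2 \<bullet> u3 = s\<^sup>2 / 2"
    using s inner_equilateral[of a b s c] inner_equilateral[of a b s d] inner_equilateral[of a c s d]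
    unfolding u1_def u2_def u3_def
    by (simp_all add: dist_norm norm_minus_commute flip: power2_norm_eq_inner)
  \<comment> \<open>The dual basis of (4,4,0), (4,0,4), (0,4,4): L maps these edge vectors of the base
    tetrahedron to the edge vectors u1, u2, u3 of T.\<close>
  define w1 w2 w3 :: "real^3" where
    "w1 = vector [1/8, 1/8, -1/8]" and "w2 = vector [1/8, -1/8, 1/8]" and "w3 = vector [-1/8, 1/8, 1/8]"
  define L where "L x = (w1 \<bullet> x) *\<^sub>R u1 + (w2 \<bullet> x) *\<^sub>R u2 + (w3 \<bullet> x) *\<^sub>R u3" for x
  define k where "k = s / sqrt 32"
  have k: "k > 0" "k\<^sup>2 = s\<^sup>2 / 32"
    using s(1) by (simp_all add: k_def power_divide)
  have "(norm (L x))\<^sup>2 = s\<^sup>2 * ((w1 \<bullet> x)\<^sup>2 + (w2 \<bullet> x)\<^sup>2 + (w3 \<bullet> x)\<^sup>2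
      + (w1 \<bullet> x) * (w2 \<bullet> x) + (w1 \<bullet> x) * (w3 \<bullet> x) + (w2 \<bullet> x) * (w3 \<bullet> x))" for x
    unfolding L_def by (rule norm_equiangular_combination[OF gram])
  also have "\<dots> x = (k * norm x)\<^sup>2" for x
    unfolding power_mult_distrib k(2) power2_norm_eq_inner w1_def w2_def w3_def
    by (simp add: inner_vec_def sum_3 vector_3 power2_eq_square field_simps)
  finally have "norm (L x) = k * norm x" for x
    using k(1) by (simp add: power2_eq_iff_nonneg)
  moreover have "linear L"
    unfolding L_def by (simp add: linear_iff inner_add_right algebra_simps scaleR_add_left)
  ultimately obtain Q where Q: "orthogonal_matrix Q" "\<And>x. L x = k *\<^sub>R (Q *v x)"
    using scaled_isometry_matrix k(1) by blast
  have "similarity a k Q x = a + L x" for x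
    by (simp add: similarity_def Q(2))
  then have "similarity a k Q ` base_vertices = {a, b, c, d}"
    unfolding base_vertices_def
    by (simp add: L_def w1_def w2_def w3_def u1_def u2_def u3_def inner_vec_def sum_3 vector_3)
  moreover have "k \<noteq> 0"
    using k(1) by simp
  ultimately show ?thesis
    using that[OF Q(1)] by blast
qed

lemma regular_tetrahedron_similar_base:
  assumes "regular_tetrahedron T"
  obtains a k Q where "orthogonal_matrix Q" "k \<noteq> 0" "T = similarity a k Q ` base_tetrahedron"
proof -
  obtain a b c d s where s: "s > 0" "dist a b = s" "dist a c = s" "dist a d = s"
    "dist b c = s" "dist b d = s" "dist c d = s" and T: "T = convex hull {a, b, c, d}"
    using assms unfolding regular_tetrahedron_def by blast
  obtain k Q where Q: "orthogonal_matrix Q" "k \<noteq> 0"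
    and vertices: "similarity a k Q ` base_vertices = {a, b, c, d}"
    using similarity_onto_regular_vertices[OF s] .
  have "T = similarity a k Q ` base_tetrahedron"
    using vertices unfolding T base_tetrahedron_hull by (simp flip: convex_hull_similarity_image)
  with Q show ?thesis
    by (rule that)
qed

theorem lemma3:
  fixes T :: "(real^3) set"
  assumes "regular_tetrahedron T"
  shows "inside_out_dissectable T 34"
proof -
  obtain a k Q where "orthogonal_matrix Q" "k \<noteq> 0" "T = similarity a k Q ` base_tetrahedron"
    using regular_tetrahedron_similar_base[OF assms] .
  moreover have "inside_out_dissectable base_tetrahedron 34"
    using inside_out_dissection_base_tetrahedron unfolding inside_out_dissectable_def by blast
  ultimately show ?thesis
    using inside_out_dissectable_similarity_image by blast
qed

end
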